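(* Suppose $c\ge a\ge d_1>0$ and $c\ge b>d_2>0$ are real numbers. Then the equation $$d_1^{-\beta}+d_2^{-\beta}-a^{-\beta}-b^{-\beta}-c^{-\beta}+1=0$$ has at most one solution $\beta>0$. *)

theory Defs
  imports Complex_Main
begin

end

theory Submission
  imports Defs
begin

(*
  Multiplying the equation by c^\<beta> > 0 turns it into g(\<beta>) = 0 for the exponential sum
     g(x) = e^{x l} - 1 + e^{x p1} - e^{x q1} + e^{x p2} - e^{x q2},
  where l = ln c, p1 = ln(c/d1) \<ge> q1 = ln(c/a) \<ge> 0 and p2 = ln(c/d2) > q2 = ln(c/b) \<ge> 0.
  Each pair p e^{x p} - q e^{x q} with p \<ge> q \<ge> 0 has non-decreasing increments on [0,\<infinity>),
  strictly so if p > q, and l e^{x l} is non-decreasing for every l; hence g' is strictly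
  increasing on [0,\<infinity>).  Since g(0) = 0, two distinct positive zeros of g would give, by
  Rolle's theorem, two zeros of g' on [0,\<infinity>), which is impossible.
*)

lemma exp_scaled_deriv_mono:
  fixes l s t :: real
  assumes "s \<le> t"
  shows "l * exp (s * l) \<le> l * exp (t * l)"
proof (cases "l \<ge> 0")
  case True
  then have "exp (s * l) \<le> exp (t * l)" using assms by (simp add: mult_right_mono)
  then show ?thesis using True by (simp add: mult_left_mono)
next
  case False
  then have "exp (t * l) \<le> exp (s * l)" using assms by (simp add: mult_right_mono_neg)
  then show ?thesis using False by (simp add: mult_left_mono_neg)
qed

lemma exp_increment_strict_mono:
  fixes s t :: real
  assumes "0 \<le> s" "s < t"
  shows "strict_mono_on {0..} (\<lambda>p. p * (exp (t * p) - exp (s * p)))"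
proof (rule strict_mono_onI)
  fix q p :: real
  assume "q \<in> {0..}" "p \<in> {0..}" "q < p"
  then have q: "0 \<le> q" and "q < p" by auto
  have split: "exp (t * r) - exp (s * r) = exp (s * r) * (exp ((t - s) * r) - 1)" for r
    by (simp add: algebra_simps flip: exp_add)
  have "exp (s * q) \<le> exp (s * p)"
    using assms q \<open>q < p\<close> by (simp add: mult_left_mono)
  moreover have "0 \<le> exp ((t - s) * q) - 1"
    using assms q by simp
  moreover have "exp ((t - s) * q) - 1 \<le> exp ((t - s) * p) - 1"
    using assms \<open>q < p\<close> by (simp add: mult_left_mono)
  ultimately have inc_le: "exp (t * q) - exp (s * q) \<le> exp (t * p) - exp (s * p)"
    and inc_nonneg: "0 \<le> exp (t * q) - exp (s * q)"
    unfolding split by (simp_all add: mult_mono)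
  have inc_pos: "0 < exp (t * p) - exp (s * p)"
    using assms q \<open>q < p\<close> by (simp add: mult_strict_right_mono)
  have "q * (exp (t * q) - exp (s * q)) \<le> q * (exp (t * p) - exp (s * p))"
    using inc_le q by (rule mult_left_mono)
  also have "\<dots> < p * (exp (t * p) - exp (s * p))"
    using \<open>q < p\<close> inc_pos by (rule mult_strict_right_mono)
  finally show "q * (exp (t * q) - exp (s * q)) < p * (exp (t * p) - exp (s * p))" .
qed

lemma exp_sum_deriv_strict_mono:
  fixes l p1 q1 p2 q2 :: real
  assumes "q1 \<le> p1" "0 \<le> q1" "q2 < p2" "0 \<le> q2"
  shows "strict_mono_on {0..} (\<lambda>x. l * exp (x * l) + p1 * exp (x * p1) - q1 * exp (x * q1)
                                   + p2 * exp (x * p2) - q2 * exp (x * q2))"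
proof (rule strict_mono_onI)
  fix s t :: real
  assume "s \<in> {0..}" "t \<in> {0..}" "s < t"
  then have st: "0 \<le> s" "s < t" by auto
  note inc = exp_increment_strict_mono[OF st]
  have "l * exp (s * l) \<le> l * exp (t * l)"
    using st by (intro exp_scaled_deriv_mono) simp
  moreover have "q1 * (exp (t * q1) - exp (s * q1)) \<le> p1 * (exp (t * p1) - exp (s * p1))"
    using assms by (intro strict_mono_on_leD[OF inc]) auto
  moreover have "q2 * (exp (t * q2) - exp (s * q2)) < p2 * (exp (t * p2) - exp (s * p2))"
    using assms by (intro strict_mono_onD[OF inc]) auto
  ultimately show "l * exp (s * l) + p1 * exp (s * p1) - q1 * exp (s * q1)
                   + p2 * exp (s * p2) - q2 * exp (s * q2)
                 < l * exp (t * l) + p1 * exp (t * p1) - q1 * exp (t * q1)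
                   + p2 * exp (t * p2) - q2 * exp (t * q2)"
    by (simp add: algebra_simps)
qed

text \<open>Rolle's theorem, applied twice: if g is differentiable, vanishes at u, and its
  derivative is strictly increasing on [u,\<infinity>), then g has at most one zero in (u,\<infinity>).\<close>
lemma at_most_one_zero_beyond_root:
  fixes g g' :: "real \<Rightarrow> real"
  assumes deriv: "\<And>x. (g has_real_derivative g' x) (at x)"
    and mono: "strict_mono_on {u..} g'"
    and root: "g u = 0"
  shows "\<forall>x y. u < x \<and> u < y \<and> g x = 0 \<and> g y = 0 \<longrightarrow> x = y"
proof -
  have cont: "continuous_on S g" for S
    using deriv by (meson DERIV_isCont continuous_at_imp_continuous_on)
  have diff: "g differentiable (at x)" for x
    using deriv real_differentiable_def by blast
  have critical: "\<exists>z. v < z \<and> z < w \<and> g' z = 0" if "v < w" "g v = 0" "g w = 0" for v w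
  proof -
    have "g v = g w" using that by simp
    then obtain z where "v < z" "z < w" "(g has_real_derivative 0) (at z)"
      using Rolle[OF \<open>v < w\<close> _ cont diff] by blast
    then show ?thesis using deriv DERIV_unique by blast
  qed
  have no_two: False if zeros: "u < x" "x < y" "g x = 0" "g y = 0" for x y
  proof -
    obtain z1 where "u < z1" "z1 < x" "g' z1 = 0" using critical root zeros by blast
    moreover obtain z2 where "x < z2" "g' z2 = 0" using critical zeros by blast
    ultimately show False using mono by (auto dest!: strict_mono_onD[of _ _ z1 z2])
  qed
  show ?thesis by (metis linorder_neqE_linordered_idom no_two)
qed

lemma powr_neg_relative:
  fixes c d x :: real
  assumes "0 < c" "0 < d"
  shows "d powr (- x) = c powr (- x) * exp (x * (ln c - ln d))"
  using assms by (simp add: powr_def algebra_simps flip: exp_add)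

theorem lemma1:
  fixes a b c d1 d2 :: real
  assumes "c \<ge> a" and "a \<ge> d1" and "d1 > 0"
    and "c \<ge> b" and "b > d2" and "d2 > 0"
  shows "\<forall>\<beta>1 \<beta>2. \<beta>1 > 0 \<and> \<beta>2 > 0
      \<and> d1 powr (-\<beta>1) + d2 powr (-\<beta>1) - a powr (-\<beta>1) - b powr (-\<beta>1) - c powr (-\<beta>1) + 1 = 0
      \<and> d1 powr (-\<beta>2) + d2 powr (-\<beta>2) - a powr (-\<beta>2) - b powr (-\<beta>2) - c powr (-\<beta>2) + 1 = 0
      \<longrightarrow> \<beta>1 = \<beta>2"
proof -
  define l p1 q1 p2 q2 where "l = ln c" and "p1 = ln c - ln d1" and "q1 = ln c - ln a"
    and "p2 = ln c - ln d2" and "q2 = ln c - ln b"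
  define g where "g x = exp (x * l) - 1 + exp (x * p1) - exp (x * q1)
                        + exp (x * p2) - exp (x * q2)" for x
  have pos: "0 < a" "0 < b" "0 < c" using assms by auto
  have rates: "q1 \<le> p1" "0 \<le> q1" "q2 < p2" "0 \<le> q2"
    using assms pos by (auto simp: p1_def q1_def p2_def q2_def)
  have "(g has_real_derivative l * exp (x * l) + p1 * exp (x * p1) - q1 * exp (x * q1)
                               + p2 * exp (x * p2) - q2 * exp (x * q2)) (at x)" for x
    unfolding g_def by (auto intro!: derivative_eq_intros simp: algebra_simps)
  moreover have "g 0 = 0"
    by (simp add: g_def)
  ultimately have unique: "\<forall>x y. 0 < x \<and> 0 < y \<and> g x = 0 \<and> g y = 0 \<longrightarrow> x = y"
    using at_most_one_zero_beyond_root[OF _ exp_sum_deriv_strict_mono[OF rates]] by blast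
  have equation_iff: "d1 powr (-x) + d2 powr (-x) - a powr (-x) - b powr (-x) - c powr (-x) + 1 = 0
                        \<longleftrightarrow> g x = 0" for x
  proof -
    have rel: "d powr (-x) = c powr (-x) * exp (x * (l - ln d))" if "0 < d" for d
      using powr_neg_relative[OF pos(3) that] by (simp add: l_def)
    have one: "c powr (-x) * exp (x * l) = 1"
      using pos by (simp add: l_def powr_def flip: exp_add)
    have "d1 powr (-x) + d2 powr (-x) - a powr (-x) - b powr (-x) - c powr (-x) + 1
        = c powr (-x) * exp (x * p1) + c powr (-x) * exp (x * p2) - c powr (-x) * exp (x * q1)
          - c powr (-x) * exp (x * q2) - c powr (-x) + c powr (-x) * exp (x * l)"
      unfolding p1_def p2_def q1_def q2_def l_def[symmetric]
      by (simp only: rel[OF \<open>0 < d1\<close>] rel[OF \<open>0 < d2\<close>] rel[OF pos(1)] rel[OF pos(2)] one)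
    also have "\<dots> = c powr (-x) * g x"
      unfolding g_def by (simp add: algebra_simps)
    finally show ?thesis
      using pos(3) by simp
  qed
  show ?thesis
    unfolding equation_iff using unique by blast
qed

end
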